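(* Let $N$ and $L$ be integers with $1\le L\le N-1$ and let $\hat\alpha>0$. Let $z,y$ be independent random variables with $z\sim\mathrm{Gamma}(N-L,1)$ and $y\sim\mathrm{Gamma}(L,1)$, and set $X=\hat\alpha z/y$. Then $$\mathbb{E}\left[\ln(1+X)\right]=\sum_{i=0}^{N-L-1}\binom{L+i-1}{i}\hat{\alpha}^L\,I_2(\hat{\alpha},i,L+i).$$
   Context: $\mathrm{Gamma}(n,1)$ denotes the distribution with density $t^{n-1}e^{-t}/(n-1)!$ on $t>0$ (its CDF is $1-e^{-t}\sum_{i=0}^{n-1}t^i/i!$). For $a>0$ and nonnegative integers $m,n$ with $n\ge m+1$, define $$I_2(a,m,n)=\int_0^\infty\frac{x^m}{(x+a)^n(x+1)}\,dx.$$ *)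

theory Defs
  imports "HOL-Probability.Probability"
begin

definition I2 :: "real \<Rightarrow> nat \<Rightarrow> nat \<Rightarrow> real" where
  "I2 a m n = (LBINT x:{0<..}. x ^ m / ((x + a) ^ n * (x + 1)))"

end

theory Submission
  imports Defs
begin

(*
  Write X = \<alpha> z / y with z ~ Gamma(k+1,1), y ~ Gamma(l+1,1) independent, so k = N-L-1, L = l+1.
  The proof has three ingredients.

  (1) Layer cake for ln(1+x): since ln(1+x) = \<integral>_0^x dt/(1+t), Tonelli gives
        E[ln(1+X)] = \<integral>_0^\<infinity> P(X > t) / (1+t) dt   for X \<ge> 0.
  (2) Negative-binomial tail: conditioning on y and using the Poisson form of the Erlang tail,
        P(z > s y) = \<Sum>_{i\<le>k} C(l+i,i) s^i / (1+s)^(l+1+i)    for s \<ge> 0,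
      because the product of the Gamma(l+1) density with a Poisson weight is a multiple
      of a Gamma(l+i+1, 1+s) density.
  (3) For t > 0, P(X > t) = P(z > (t/\<alpha>) y), and each summand divided by 1+t equals
      C(l+i,i) \<alpha>^L t^i / ((t+\<alpha>)^(L+i) (t+1)), whose integral over (0,\<infinity>) is I_2(\<alpha>,i,L+i).
  All integrals are computed as nonnegative (ennreal) integrals; the expectation is recovered
  at the end since ln(1+X) \<ge> 0 almost surely.
*)

section \<open>The layer-cake formula for ln(1+X)\<close>

lemma ln_1p_eq_nn_integral:
  fixes x :: real assumes x: "0 \<le> x"
  shows "(\<integral>\<^sup>+t. ennreal (1/(1+t)) * indicator {0<..<x} t \<partial>lborel) = ennreal (ln (1+x))"
proof -
  have "(\<integral>\<^sup>+t. ennreal (1/(1+t)) * indicator {0<..<x} t \<partial>lborel)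
      = (\<integral>\<^sup>+t. ennreal (1/(1+t)) * indicator {0..x} t \<partial>lborel)"
  proof (rule nn_integral_cong_AE)
    have "AE t in lborel. t \<noteq> 0 \<and> t \<noteq> x"
      by (intro AE_conjI AE_lborel_singleton)
    then show "AE t in lborel. ennreal (1/(1+t)) * indicator {0<..<x} t = ennreal (1/(1+t)) * indicator {0..x} t"
      by (rule eventually_mono) (auto simp: indicator_def)
  qed
  also have "\<dots> = ln (1+x) - ln (1+0)"
    using x by (intro nn_integral_FTC_Icc) (auto intro!: derivative_eq_intros)
  finally show ?thesis by simp
qed

lemma nn_integral_ln_1p_tail:
  fixes M :: "'a measure" and X :: "'a \<Rightarrow> real"
  assumes "sigma_finite_measure M" and [measurable]: "X \<in> borel_measurable M"
    and nonneg: "AE \<omega> in M. 0 \<le> X \<omega>"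
  shows "(\<integral>\<^sup>+\<omega>. ennreal (ln (1 + X \<omega>)) \<partial>M) =
    (\<integral>\<^sup>+t. ennreal (1/(1+t)) * indicator {0<..} t * emeasure M {\<omega>\<in>space M. t < X \<omega>} \<partial>lborel)"
proof -
  interpret pair_sigma_finite M lborel
    using assms(1) by (simp add: pair_sigma_finite_def lborel.sigma_finite_measure_axioms)
  have "(\<integral>\<^sup>+\<omega>. ennreal (ln (1 + X \<omega>)) \<partial>M)
      = (\<integral>\<^sup>+\<omega>. \<integral>\<^sup>+t. ennreal (1/(1+t)) * indicator {0<..<X \<omega>} t \<partial>lborel \<partial>M)"
    using nonneg by (intro nn_integral_cong_AE) (auto simp: ln_1p_eq_nn_integral elim!: eventually_mono)
  also have "\<dots> = (\<integral>\<^sup>+t. \<integral>\<^sup>+\<omega>. ennreal (1/(1+t)) * indicator {0<..<X \<omega>} t \<partial>M \<partial>lborel)"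
    by (rule Fubini'[symmetric]) (simp add: indicator_def case_prod_beta)
  also have "\<dots> = (\<integral>\<^sup>+t. ennreal (1/(1+t)) * indicator {0<..} t * emeasure M {\<omega>\<in>space M. t < X \<omega>} \<partial>lborel)"
  proof (rule nn_integral_cong)
    fix t :: real
    have "(\<integral>\<^sup>+\<omega>. ennreal (1/(1+t)) * indicator {0<..<X \<omega>} t \<partial>M)
        = (\<integral>\<^sup>+\<omega>. (ennreal (1/(1+t)) * indicator {0<..} t) * indicator {\<omega>\<in>space M. t < X \<omega>} \<omega> \<partial>M)"
      by (intro nn_integral_cong) (auto simp: indicator_def)
    also have "\<dots> = ennreal (1/(1+t)) * indicator {0<..} t * emeasure M {\<omega>\<in>space M. t < X \<omega>}"
      by (rule nn_integral_cmult_indicator) measurable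
    finally show "(\<integral>\<^sup>+\<omega>. ennreal (1/(1+t)) * indicator {0<..<X \<omega>} t \<partial>M)
        = ennreal (1/(1+t)) * indicator {0<..} t * emeasure M {\<omega>\<in>space M. t < X \<omega>}" .
  qed
  finally show ?thesis .
qed

section \<open>Erlang (integer-shape Gamma) distributions\<close>

lemma AE_pos_erlang:
  assumes D: "distributed M lborel X (\<lambda>t. ennreal (erlang_density k l t))"
  shows "AE \<omega> in M. 0 < X \<omega>"
proof -
  have [measurable]: "X \<in> borel_measurable M"
    using distributed_measurable[OF D] by simp
  have "(\<integral>\<^sup>+\<omega>. indicator {..0} (X \<omega>) \<partial>M) = (\<integral>\<^sup>+x. ennreal (erlang_density k l x) * indicator {..0} x \<partial>lborel)"
    by (rule distributed_nn_integral[OF D, symmetric]) simp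
  also have "\<dots> = (\<integral>\<^sup>+x. 0 \<partial>(lborel :: real measure))"
    using AE_lborel_singleton[of 0]
    by (intro nn_integral_cong_AE) (auto simp: erlang_density_def indicator_def elim!: eventually_mono)
  finally have "(\<integral>\<^sup>+\<omega>. indicator {..0} (X \<omega>) \<partial>M) = 0" by simp
  then have "AE \<omega> in M. (indicator {..0} (X \<omega>) :: ennreal) = 0"
    by (subst (asm) nn_integral_0_iff_AE) auto
  then show ?thesis
    by eventually_elim (auto simp: indicator_def split: if_splits)
qed

lemma erlang_tail:
  fixes c :: real assumes c: "0 \<le> c"
  shows "(\<integral>\<^sup>+a. ennreal (erlang_density k 1 a) * indicator {c<..} a \<partial>lborel)
     = ennreal (\<Sum>i\<le>k. c^i * exp(-c) / fact i)"
proof -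
  let ?S = "\<Sum>i\<le>k. c^i * exp(-c) / fact i"
  let ?T = "(\<integral>\<^sup>+a. ennreal (erlang_density k 1 a) * indicator {c<..} a \<partial>lborel)"
  have "1 = (\<integral>\<^sup>+a. ennreal (erlang_density k 1 a) \<partial>lborel)"
    using nn_integral_erlang_ith_moment[of 1 k 0] by simp
  also have "\<dots> = (\<integral>\<^sup>+a. ennreal (erlang_density k 1 a) * indicator {..c} a
                       + ennreal (erlang_density k 1 a) * indicator {c<..} a \<partial>lborel)"
    by (intro nn_integral_cong) (auto simp: indicator_def)
  also have "\<dots> = ennreal (1 - ?S) + ?T"
    using nn_integral_erlang_density[of 1 k c] c
    by (subst nn_integral_add) (auto simp: erlang_CDF_def)
  finally have total: "1 = ennreal (1 - ?S) + ?T" .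
  have "0 \<le> ?S" using c by (intro sum_nonneg) auto
  have "?S \<le> 1" using erlang_CDF_nonneg[of 1 k c] c by (simp add: erlang_CDF_def)
  have "?T = (ennreal (1 - ?S) + ?T) - ennreal (1 - ?S)" by simp
  also have "\<dots> = 1 - ennreal (1 - ?S)" using total by simp
  also have "\<dots> = ennreal ?S"
    using \<open>0 \<le> ?S\<close> \<open>?S \<le> 1\<close> ennreal_minus[of "1 - ?S" 1] by simp
  finally show ?thesis .
qed

text \<open>The Gamma(l+1,1) density times a Poisson(s b) weight is a multiple of the Gamma(l+i+1,1+s)
  density; this is what turns \<open>P(z > s y)\<close> into a finite sum.\<close>
lemma erlang_density_times_poisson:
  fixes b s :: real and l i :: nat
  assumes s: "0 \<le> s"
  shows "erlang_density l 1 b * ((s*b)^i * exp(-(s*b)) / fact i) =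
    real ((l + i) choose i) * s^i / (1+s)^(Suc l + i) * erlang_density (l+i) (1+s) b"
proof (cases "b < 0")
  case False
  have binom: "real ((l + i) choose i) = fact (l+i) / (fact i * fact l)"
    using binomial_fact[of i "l+i"] by simp
  have exp_split: "exp(-(1+s)*b) = exp(-b) * exp(-(s*b))"
    by (simp add: exp_add[symmetric] algebra_simps)
  define P where "P = (1+s)^(Suc l + i)"
  define B where "B = b^(l+i) * exp(-(1+s)*b)"
  have "P \<noteq> 0" using s by (simp add: P_def)
  have "real ((l + i) choose i) * s^i / (1+s)^(Suc l + i) * erlang_density (l+i) (1+s) b
      = fact (l+i) / (fact i * fact l) * s^i / P * (P * B / fact (l+i))"
    using False s unfolding binom by (simp add: erlang_density_def P_def B_def mult.assoc)
  also have "\<dots> = s^i * B / (fact i * fact l)"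
    using \<open>P \<noteq> 0\<close> by (simp add: field_simps)
  also have "\<dots> = erlang_density l 1 b * ((s*b)^i * exp(-(s*b)) / fact i)"
    using False unfolding B_def exp_split
    by (simp add: erlang_density_def field_simps power_add power_mult_distrib)
  finally show ?thesis ..
qed (simp add: erlang_density_def)

text \<open>Integrating the Poisson-weighted Gamma(l+1,1) density: each Gamma(l+i+1,1+s) density
  integrates to one.\<close>
lemma nn_integral_erlang_poisson_mixture:
  fixes s :: real and l k :: nat
  assumes s: "0 \<le> s"
  shows "(\<integral>\<^sup>+b. ennreal (erlang_density l 1 b * (\<Sum>i\<le>k. (s*b)^i * exp(-(s*b)) / fact i)) \<partial>lborel)
    = ennreal (\<Sum>i\<le>k. real ((l+i) choose i) * s^i / (1+s)^(Suc l+i))"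
proof -
  define c where "c i = real ((l+i) choose i) * s^i / (1+s)^(Suc l+i)" for i
  have c_nonneg: "0 \<le> c i" for i using s by (simp add: c_def)
  have "(\<integral>\<^sup>+b. ennreal (erlang_density l 1 b * (\<Sum>i\<le>k. (s*b)^i * exp(-(s*b)) / fact i)) \<partial>lborel)
     = (\<integral>\<^sup>+b. (\<Sum>i\<le>k. ennreal (c i) * ennreal (erlang_density (l+i) (1+s) b)) \<partial>lborel)"
  proof (rule nn_integral_cong)
    fix b :: real
    have "erlang_density l 1 b * (\<Sum>i\<le>k. (s*b)^i * exp(-(s*b)) / fact i)
        = (\<Sum>i\<le>k. c i * erlang_density (l+i) (1+s) b)"
      unfolding sum_distrib_left c_def using s by (intro sum.cong refl erlang_density_times_poisson)
    then show "ennreal (erlang_density l 1 b * (\<Sum>i\<le>k. (s*b)^i * exp(-(s*b)) / fact i))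
        = (\<Sum>i\<le>k. ennreal (c i) * ennreal (erlang_density (l+i) (1+s) b))"
      using s c_nonneg by (simp add: sum_ennreal[symmetric] ennreal_mult)
  qed
  also have "\<dots> = (\<Sum>i\<le>k. ennreal (c i) * (\<integral>\<^sup>+b. ennreal (erlang_density (l+i) (1+s) b) \<partial>lborel))"
    by (subst nn_integral_sum) (auto intro!: sum.cong nn_integral_cmult)
  also have "\<dots> = (\<Sum>i\<le>k. ennreal (c i))"
    using nn_integral_erlang_ith_moment[of "1+s" _ 0] s by simp
  also have "\<dots> = ennreal (\<Sum>i\<le>k. c i)"
    using c_nonneg by (intro sum_ennreal) auto
  finally show ?thesis by (simp add: c_def)
qed

lemma emeasure_erlang_gt_scaled_erlang:
  fixes M :: "'a measure" and z y :: "'a \<Rightarrow> real" and s :: real and k l :: nat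
  assumes D2: "distributed M (lborel \<Otimes>\<^sub>M lborel) (\<lambda>\<omega>. (z \<omega>, y \<omega>))
      (\<lambda>(a, b). ennreal (erlang_density k 1 a) * ennreal (erlang_density l 1 b))"
    and s: "0 \<le> s"
  shows "emeasure M {\<omega>\<in>space M. s * y \<omega> < z \<omega>}
     = ennreal (\<Sum>i\<le>k. real ((l+i) choose i) * s^i / (1+s)^(Suc l+i))"
proof -
  have [measurable]: "z \<in> borel_measurable M" "y \<in> borel_measurable M"
    using distributed_measurable[OF D2] by (auto simp: measurable_pair_iff comp_def)
  have "emeasure M {\<omega>\<in>space M. s * y \<omega> < z \<omega>}
      = (\<integral>\<^sup>+\<omega>. indicator {\<omega>\<in>space M. s * y \<omega> < z \<omega>} \<omega> \<partial>M)"
    by (rule nn_integral_indicator[symmetric]) measurable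
  also have "\<dots> = (\<integral>\<^sup>+\<omega>. indicator {p. s * snd p < fst p} (z \<omega>, y \<omega>) \<partial>M)"
    by (intro nn_integral_cong) (auto simp: indicator_def)
  also have "\<dots> = (\<integral>\<^sup>+p. (case p of (a, b) \<Rightarrow> ennreal (erlang_density k 1 a) * ennreal (erlang_density l 1 b))
                        * indicator {p. s * snd p < fst p} p \<partial>(lborel \<Otimes>\<^sub>M lborel))"
    by (rule distributed_nn_integral[OF D2, symmetric]) simp
  also have "\<dots> = (\<integral>\<^sup>+b. ennreal (erlang_density l 1 b) *
                     (\<integral>\<^sup>+a. ennreal (erlang_density k 1 a) * indicator {s*b<..} a \<partial>lborel) \<partial>lborel)"
    by (subst lborel_pair.nn_integral_snd[symmetric])
       (auto intro!: nn_integral_cong simp: case_prod_beta indicator_def nn_integral_cmult[symmetric] mult_ac)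
  also have "\<dots> = (\<integral>\<^sup>+b. ennreal (erlang_density l 1 b * (\<Sum>i\<le>k. (s*b)^i * exp(-(s*b)) / fact i)) \<partial>lborel)"
  proof (rule nn_integral_cong)
    fix b :: real
    show "ennreal (erlang_density l 1 b) * (\<integral>\<^sup>+a. ennreal (erlang_density k 1 a) * indicator {s*b<..} a \<partial>lborel)
        = ennreal (erlang_density l 1 b * (\<Sum>i\<le>k. (s*b)^i * exp(-(s*b)) / fact i))"
    proof (cases "b < 0")
      case False
      with s have "0 \<le> s * b" by simp
      then show ?thesis by (simp add: erlang_tail ennreal_mult sum_nonneg)
    qed (simp add: erlang_density_def)
  qed
  also have "\<dots> = ennreal (\<Sum>i\<le>k. real ((l+i) choose i) * s^i / (1+s)^(Suc l+i))"
    using s by (rule nn_integral_erlang_poisson_mixture)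
  finally show ?thesis .
qed

section \<open>The integrals I2\<close>

lemma I2_nonneg:
  assumes "0 < a" shows "0 \<le> I2 a m n"
  unfolding I2_def set_lebesgue_integral_def
  by (intro integral_nonneg_AE AE_I2) (use assms in \<open>auto simp: indicator_def\<close>)

lemma I2_integrand_bound:
  fixes t a :: real and m n :: nat
  assumes a: "0 < a" and t: "0 < t" and mn: "m + 1 \<le> n"
  shows "t^m / ((t+a)^n * (t+1)) \<le> (1 / (min a 1)^(n-m)) / (1+t)^2"
proof -
  define d where "d = n - m"
  define \<beta> where "\<beta> = min a 1"
  have d: "1 \<le> d" "n = m + d" using mn by (auto simp: d_def)
  have \<beta>_pos: "0 < \<beta>" using a by (simp add: \<beta>_def)
  have "\<beta> * (t+1) \<le> t + a"
    using a t by (auto simp: \<beta>_def min_def algebra_simps intro: mult_left_le_one_le)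
  then have "(\<beta> * (t+1))^d \<le> (t+a)^d" using \<beta>_pos t by (intro power_mono) auto
  moreover have "t+1 \<le> (t+1)^d" using d t by (intro self_le_power) auto
  ultimately have denom: "\<beta>^d * (t+1) \<le> (t+a)^d"
    using \<beta>_pos by (smt (verit) mult_left_mono power_mult_distrib zero_less_power)
  have num: "t^m \<le> (t+a)^m" using a t by (intro power_mono) auto
  have "t^m / ((t+a)^n * (t+1)) = (t^m / (t+a)^m) * (1 / ((t+a)^d * (t+1)))"
    using a t d by (simp add: power_add field_simps)
  also have "\<dots> \<le> 1 * (1 / ((t+a)^d * (t+1)))"
    using num a t by (intro mult_right_mono) (auto simp: divide_le_eq)
  also have "\<dots> \<le> 1 / ((\<beta>^d * (t+1)) * (t+1))"
    using denom \<beta>_pos t a by (simp, intro divide_left_mono mult_right_mono mult_pos_pos) auto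
  also have "\<dots> = (1 / \<beta>^d) / (1+t)^2"
    by (simp add: power2_eq_square algebra_simps)
  finally show ?thesis by (simp add: \<beta>_def d_def)
qed

lemma nn_integral_I2:
  fixes a :: real and m n :: nat
  assumes a: "0 < a" and mn: "m + 1 \<le> n"
  shows "(\<integral>\<^sup>+t. ennreal (t^m / ((t+a)^n * (t+1))) * indicator {0<..} t \<partial>lborel) = ennreal (I2 a m n)"
proof -
  define q where "q t = indicator {0<..} t * (t^m / ((t+a)^n * (t+1)))" for t :: real
  define C where "C = 1 / (min a 1)^(n-m)"
  have "0 < C" using a by (simp add: C_def)
  have q_nonneg: "0 \<le> q t" for t using a by (simp add: q_def indicator_def)
  have [measurable]: "q \<in> borel_measurable borel" unfolding q_def by measurable
  have "(\<integral>\<^sup>+t. ennreal (q t) \<partial>lborel) \<le> (\<integral>\<^sup>+t. ennreal (C / (1+t)^2) * indicator {0..} t \<partial>lborel)"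
    using I2_integrand_bound[OF a _ mn]
    by (intro nn_integral_mono) (auto simp: indicator_def q_def C_def intro!: ennreal_leI)
  also have "\<dots> = 0 - (- C / (1 + 0))"
  proof (rule nn_integral_FTC_atLeast)
    show "((\<lambda>t. - C / (1+t)) \<longlongrightarrow> 0) at_top"
      by (intro tendsto_divide_0[OF tendsto_const] filterlim_at_top_imp_at_infinity
            filterlim_tendsto_add_at_top[OF tendsto_const filterlim_ident])
  qed (use \<open>0 < C\<close> in \<open>auto intro!: derivative_eq_intros simp: power2_eq_square field_simps\<close>)
  finally have "(\<integral>\<^sup>+t. ennreal (q t) \<partial>lborel) < \<infinity>"
    by (metis ennreal_less_top infinity_ennreal_def le_less_trans)
  then have "integrable lborel q"
    using q_nonneg by (intro integrableI_nonneg) auto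
  then have "(\<integral>\<^sup>+t. ennreal (q t) \<partial>lborel) = ennreal (integral\<^sup>L lborel q)"
    using q_nonneg by (intro nn_integral_eq_integral) auto
  moreover have "integral\<^sup>L lborel q = I2 a m n"
    by (simp add: I2_def set_lebesgue_integral_def q_def[abs_def])
  ultimately show ?thesis
    by (simp add: q_def indicator_mult_ennreal mult.commute)
qed

text \<open>Rescaling the negative-binomial tail at \<open>s = t/\<alpha>\<close> and dividing by \<open>1+t\<close> yields the
  integrand of \<open>I2 \<alpha> i (L+i)\<close>.\<close>
lemma tail_term_rescale:
  fixes a t :: real assumes a: "0 < a" and t: "0 < t"
  shows "1/(1+t) * (c * (t/a)^i / (1 + t/a)^(L+i)) = c * a^L * (t^i / ((t+a)^(L+i) * (t+1)))"
proof -
  have "1 + t/a = (t+a)/a" using a by (simp add: field_simps)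
  then have "(t/a)^i / (1 + t/a)^(L+i) = (t^i / a^i) / ((t+a)^(L+i) / a^(L+i))"
    by (simp add: power_divide)
  also have "\<dots> = a^L * (t^i / (t+a)^(L+i))"
    using a t by (simp add: field_simps power_add)
  finally show ?thesis
    using a t by (simp add: field_simps)
qed

text \<open>For \<open>t > 0\<close>: \<open>P(\<alpha> z / y > t) / (1+t) = \<Sum>\<^sub>i\<^sub>\<le>\<^sub>k C(l+i,i) \<alpha>\<^sup>L t\<^sup>i / ((t+\<alpha>)\<^sup>L\<^sup>+\<^sup>i (t+1))\<close>, obtained from
  the negative-binomial tail at \<open>s = t/\<alpha>\<close> (the events agree whenever \<open>y > 0\<close>).\<close>
lemma tail_ratio_erlang:
  fixes M :: "'a measure" and z y :: "'a \<Rightarrow> real" and \<alpha> t :: real and k l :: nat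
  assumes D2: "distributed M (lborel \<Otimes>\<^sub>M lborel) (\<lambda>\<omega>. (z \<omega>, y \<omega>))
      (\<lambda>(a, b). ennreal (erlang_density k 1 a) * ennreal (erlang_density l 1 b))"
    and a: "0 < \<alpha>" and t: "0 < t" and y_pos: "AE \<omega> in M. 0 < y \<omega>"
  shows "ennreal (1/(1+t)) * emeasure M {\<omega>\<in>space M. t < \<alpha> * z \<omega> / y \<omega>}
    = (\<Sum>i\<le>k. ennreal (real ((l+i) choose i) * \<alpha>^Suc l) * ennreal (t^i / ((t+\<alpha>)^(Suc l + i) * (t+1))))"
proof -
  define c where "c i = real ((l+i) choose i)" for i
  have [measurable]: "z \<in> borel_measurable M" "y \<in> borel_measurable M"
    using distributed_measurable[OF D2] by (auto simp: measurable_pair_iff comp_def)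
  have "AE \<omega> in M. t < \<alpha> * z \<omega> / y \<omega> \<longleftrightarrow> (t/\<alpha>) * y \<omega> < z \<omega>"
    using y_pos by (rule eventually_mono) (use a in \<open>simp add: field_simps\<close>)
  then have "emeasure M {\<omega>\<in>space M. t < \<alpha> * z \<omega> / y \<omega>} = emeasure M {\<omega>\<in>space M. (t/\<alpha>) * y \<omega> < z \<omega>}"
    by (rule emeasure_Collect_eq_AE) measurable
  also have "\<dots> = ennreal (\<Sum>i\<le>k. c i * (t/\<alpha>)^i / (1+t/\<alpha>)^(Suc l+i))"
    unfolding c_def using t a by (intro emeasure_erlang_gt_scaled_erlang[OF D2]) auto
  finally have "ennreal (1/(1+t)) * emeasure M {\<omega>\<in>space M. t < \<alpha> * z \<omega> / y \<omega>}
      = ennreal (1/(1+t)) * ennreal (\<Sum>i\<le>k. c i * (t/\<alpha>)^i / (1+t/\<alpha>)^(Suc l+i))"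
    by (rule arg_cong)
  also have "\<dots> = ennreal (1/(1+t) * (\<Sum>i\<le>k. c i * (t/\<alpha>)^i / (1+t/\<alpha>)^(Suc l+i)))"
    using t a by (intro ennreal_mult[symmetric] sum_nonneg) (auto simp: c_def)
  also have "\<dots> = ennreal (\<Sum>i\<le>k. c i * \<alpha>^Suc l * (t^i / ((t+\<alpha>)^(Suc l + i) * (t+1))))"
    unfolding sum_distrib_left
    by (intro arg_cong[where f = ennreal] sum.cong refl tail_term_rescale a t)
  also have "\<dots> = (\<Sum>i\<le>k. ennreal (c i * \<alpha>^Suc l * (t^i / ((t+\<alpha>)^(Suc l + i) * (t+1)))))"
    using t a by (intro sum_ennreal[symmetric]) (simp add: c_def)
  also have "\<dots> = (\<Sum>i\<le>k. ennreal (c i * \<alpha>^Suc l) * ennreal (t^i / ((t+\<alpha>)^(Suc l + i) * (t+1))))"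
    using t a by (intro sum.cong refl ennreal_mult) (auto simp: c_def)
  finally show ?thesis by (simp only: c_def)
qed

lemma nn_integral_ln_1p_erlang_ratio:
  fixes M :: "'a measure" and z y :: "'a \<Rightarrow> real" and \<alpha> :: real and k l :: nat
  assumes "sigma_finite_measure M"
    and D2: "distributed M (lborel \<Otimes>\<^sub>M lborel) (\<lambda>\<omega>. (z \<omega>, y \<omega>))
      (\<lambda>(a, b). ennreal (erlang_density k 1 a) * ennreal (erlang_density l 1 b))"
    and a: "0 < \<alpha>" and y_pos: "AE \<omega> in M. 0 < y \<omega>" and z_nonneg: "AE \<omega> in M. 0 \<le> z \<omega>"
  shows "(\<integral>\<^sup>+\<omega>. ennreal (ln (1 + \<alpha> * z \<omega> / y \<omega>)) \<partial>M)
    = ennreal (\<Sum>i\<le>k. real ((l+i) choose i) * \<alpha>^Suc l * I2 \<alpha> i (Suc l + i))"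
proof -
  define w where "w i = real ((l+i) choose i) * \<alpha>^Suc l" for i
  define q where "q i t = t^i / ((t+\<alpha>)^(Suc l + i) * (t+1))" for i t
  have w_nonneg: "0 \<le> w i" for i using a by (simp add: w_def)
  have [measurable]: "z \<in> borel_measurable M" "y \<in> borel_measurable M"
    using distributed_measurable[OF D2] by (auto simp: measurable_pair_iff comp_def)
  have [measurable]: "(\<lambda>t. q i t) \<in> borel_measurable borel" for i
    unfolding q_def by measurable
  have "AE \<omega> in M. 0 \<le> \<alpha> * z \<omega> / y \<omega>"
    using y_pos z_nonneg by eventually_elim (use a in auto)
  then have "(\<integral>\<^sup>+\<omega>. ennreal (ln (1 + \<alpha> * z \<omega> / y \<omega>)) \<partial>M) =
      (\<integral>\<^sup>+t. ennreal (1/(1+t)) * indicator {0<..} t * emeasure M {\<omega>\<in>space M. t < \<alpha> * z \<omega> / y \<omega>} \<partial>lborel)"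
    using assms(1) by (intro nn_integral_ln_1p_tail) auto
  also have "\<dots> = (\<integral>\<^sup>+t. (\<Sum>i\<le>k. ennreal (w i) * (ennreal (q i t) * indicator {0<..} t)) \<partial>lborel)"
  proof (rule nn_integral_cong)
    fix t :: real
    show "ennreal (1/(1+t)) * indicator {0<..} t * emeasure M {\<omega>\<in>space M. t < \<alpha> * z \<omega> / y \<omega>}
        = (\<Sum>i\<le>k. ennreal (w i) * (ennreal (q i t) * indicator {0<..} t))"
    proof (cases "0 < t")
      case True
      then have "indicator {0<..} t = (1 :: ennreal)" by simp
      with tail_ratio_erlang[OF D2 a True y_pos] show ?thesis
        by (simp add: w_def q_def mult.commute)
    next
      case False
      then have "indicator {0<..} t = (0 :: ennreal)" by simp
      then show ?thesis by (simp only: mult_zero_right mult_zero_left sum.neutral_const)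
    qed
  qed
  also have "\<dots> = (\<Sum>i\<le>k. ennreal (w i) * (\<integral>\<^sup>+t. ennreal (q i t) * indicator {0<..} t \<partial>lborel))"
    by (subst nn_integral_sum) (auto intro!: sum.cong nn_integral_cmult)
  also have "\<dots> = (\<Sum>i\<le>k. ennreal (w i * I2 \<alpha> i (Suc l + i)))"
  proof (rule sum.cong[OF refl])
    fix i
    have "i + 1 \<le> Suc l + i" by simp
    from nn_integral_I2[OF a this] show "ennreal (w i) * (\<integral>\<^sup>+t. ennreal (q i t) * indicator {0<..} t \<partial>lborel)
        = ennreal (w i * I2 \<alpha> i (Suc l + i))"
      using w_nonneg I2_nonneg[OF a] by (simp add: q_def ennreal_mult)
  qed
  also have "\<dots> = ennreal (\<Sum>i\<le>k. w i * I2 \<alpha> i (Suc l + i))"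
    using a w_nonneg I2_nonneg[OF a] by (intro sum_ennreal) simp
  finally show ?thesis by (simp add: w_def)
qed

theorem mainTheorem3:
  fixes M :: "'a measure" and N L :: nat and \<alpha> :: real and z y :: "'a \<Rightarrow> real"
  assumes "prob_space M"
    and "1 \<le> L" and "L + 1 \<le> N"
    and "\<alpha> > 0"
    and "distributed M lborel z (\<lambda>t. ennreal (erlang_density (N - L - 1) 1 t))"
    and "distributed M lborel y (\<lambda>t. ennreal (erlang_density (L - 1) 1 t))"
    and "prob_space.indep_var M borel z borel y"
  shows "prob_space.expectation M (\<lambda>\<omega>. ln (1 + \<alpha> * z \<omega> / y \<omega>)) =
    (\<Sum>i = 0..N - L - 1. real ((L + i - 1) choose i) * \<alpha> ^ L * I2 \<alpha> i (L + i))"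
proof -
  interpret P: prob_space M by fact
  obtain l where L: "L = Suc l" using assms(2) by (cases L) auto
  define k where "k = N - L - 1"
  have Dz: "distributed M lborel z (\<lambda>t. ennreal (erlang_density k 1 t))" using assms(5) by (simp add: k_def)
  have Dy: "distributed M lborel y (\<lambda>t. ennreal (erlang_density l 1 t))" using assms(6) by (simp add: L)
  have [measurable]: "z \<in> borel_measurable M" "y \<in> borel_measurable M"
    using distributed_measurable[OF Dz] distributed_measurable[OF Dy] by simp_all
  have "P.indep_var lborel z lborel y"
    using assms(7) unfolding P.indep_var_eq by simp
  then have D2: "distributed M (lborel \<Otimes>\<^sub>M lborel) (\<lambda>\<omega>. (z \<omega>, y \<omega>))
      (\<lambda>(a, b). ennreal (erlang_density k 1 a) * ennreal (erlang_density l 1 b))"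
    by (intro P.distributed_joint_indep[OF lborel.sigma_finite_measure_axioms
          lborel.sigma_finite_measure_axioms Dz Dy])
  have y_pos: "AE \<omega> in M. 0 < y \<omega>"
    using AE_pos_erlang[OF Dy] .
  have z_nonneg: "AE \<omega> in M. 0 \<le> z \<omega>"
    using AE_pos_erlang[OF Dz] by (rule eventually_mono) simp
  have "P.expectation (\<lambda>\<omega>. ln (1 + \<alpha> * z \<omega> / y \<omega>)) = enn2real (\<integral>\<^sup>+\<omega>. ennreal (ln (1 + \<alpha> * z \<omega> / y \<omega>)) \<partial>M)"
    using z_nonneg y_pos assms(4)
    by (intro integral_eq_nn_integral) (auto elim!: eventually_mono[OF AE_conjI])
  also have "\<dots> = (\<Sum>i\<le>k. real ((l+i) choose i) * \<alpha>^Suc l * I2 \<alpha> i (Suc l + i))"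
    using nn_integral_ln_1p_erlang_ratio[OF P.sigma_finite_measure_axioms D2 assms(4) y_pos z_nonneg]
      assms(4) I2_nonneg[OF assms(4)]
    by (simp add: sum_nonneg)
  finally show ?thesis
    by (simp add: k_def L atLeast0AtMost)
qed

end
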